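(* The canonical structure $\mathbb{M}=(\mathbb{P},V)$ is a polarity-based (conceptual) $\mathbf{A}$-model; that is, for every atomic proposition $p\in\mathsf{Prop}$, the pair $V(p)=([\![p]\!],(\![p]\!))$ is a formal $\mathbf{A}$-concept of $\mathbb{P}$: $[\![p]\!]^{\uparrow}=(\![p]\!)$ and $[\![p]\!]=(\![p]\!)^{\downarrow}$.
   Context: Let $\mathbf{A}=(D,1,0,\vee,\wedge,\otimes,\to)$ be a complete, frame-distributive and dually frame-distributive, commutative and associative residuated lattice with $1\to\alpha=\alpha$ for all $\alpha$. Let $\mathcal{L}$ be the language $\varphi::=\bot\mid\top\mid p\mid\varphi\wedge\varphi\mid\varphi\vee\varphi\mid\Box\varphi\mid\Diamond\varphi$ and $\mathbf{L}$ the basic normal non-distributive modal logic (lattice axioms, $\top\vdash\Box\top$, $\Box p\wedge\Box q\vdash\Box(p\wedge q)$, $\Diamond\bot\vdash\bot$, $\Diamond(p\vee q)\vdash\Diamond p\vee\Diamond q$, closed under cut, substitution, the $\wedge$/$\vee$ rules and monotonicity of $\Box,\Diamond$). Let $\mathbf{Fm}$ be its Lindenbaum–Tarski algebra (formulas identified with their classes). A proper $\mathbf{A}$-filter is a map $f:\mathbf{Fm}\to\mathbf{A}$ with $f(\top)=1$, $f(\bot)=0$, $f(a\wedge b)=f(a)\wedge f(b)$; a proper $\mathbf{A}$-ideal is $i:\mathbf{Fm}\to\mathbf{A}$ with $i(\bot)=1$, $i(\top)=0$, $i(a\vee b)=i(a)\wedge i(b)$. $\mathsf{F}_{\mathbf{A}}(\mathbf{Fm})$,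 $\mathsf{I}_{\mathbf{A}}(\mathbf{Fm})$ are the sets of these. The canonical frame is $\mathbb{P}=(\mathsf{F}_{\mathbf{A}}(\mathbf{Fm}),\mathsf{I}_{\mathbf{A}}(\mathbf{Fm}),I,R_\Diamond,R_\Box)$ with $I(f,i)=\bigvee_{\phi}(f(\phi)\otimes i(\phi))$, $R_\Diamond(i,f)=\bigvee_\phi(f(\phi)\otimes i(\Diamond\phi))$, $R_\Box(f,i)=\bigvee_\phi(f(\Box\phi)\otimes i(\phi))$. For $\mathbf{A}$-subsets, $g^{\uparrow}(i)=\bigwedge_{f}(g(f)\to I(f,i))$ and $u^{\downarrow}(f)=\bigwedge_i(u(i)\to I(f,i))$. The canonical valuation assigns to each $p$ the pair $V(p)=([\![p]\!],(\![p]\!))$ with $[\![p]\!](f)=f(p)$ for $f\in\mathsf{F}_{\mathbf{A}}(\mathbf{Fm})$ and $(\![p]\!)(i)=i(p)$ for $i\in\mathsf{I}_{\mathbf{A}}(\mathbf{Fm})$; here $[\![\cdot]\!]$ denotes the extension (membership) component and $(\![\cdot]\!)$ the intension (description) component of a concept. *)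

theory Defs
  imports Main
begin

text \<open>A is a complete lattice (carrier = the type 'a) with 1 = top and 0 = bot,
  equipped with a commutative associative monoid operation otimes with unit 1 and
  its residual rimp (a otimes b <= c iff b <= a rimp c).\<close>

definition res_alg :: "('a::complete_lattice \<Rightarrow> 'a \<Rightarrow> 'a) \<Rightarrow> ('a \<Rightarrow> 'a \<Rightarrow> 'a) \<Rightarrow> bool" where
  "res_alg otimes rimp \<longleftrightarrow>
     (\<forall>a b c. otimes (otimes a b) c = otimes a (otimes b c)) \<and>
     (\<forall>a b. otimes a b = otimes b a) \<and>
     (\<forall>a. otimes top a = a) \<and>
     (\<forall>a b c. otimes a b \<le> c \<longleftrightarrow> b \<le> rimp a c) \<and>
     (\<forall>a (B::'a set). inf a (Sup B) = (SUP b\<in>B. inf a b)) \<and>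
     (\<forall>a (B::'a set). sup a (Inf B) = (INF b\<in>B. sup a b)) \<and>
     (\<forall>a. rimp top a = a)"

datatype 'p fm = FBot | FTop | Var 'p | FAnd "'p fm" "'p fm" | FOr "'p fm" "'p fm"
  | FBox "'p fm" | FDia "'p fm"

text \<open>Sequents phi |- psi derivable in L (axioms as schemata, so closure under
  substitution is built in).\<close>

inductive prov :: "'p fm \<Rightarrow> 'p fm \<Rightarrow> bool" where
  refl: "prov a a"
| bot: "prov FBot a"
| top: "prov a FTop"
| andE1: "prov (FAnd a b) a"
| andE2: "prov (FAnd a b) b"
| orI1: "prov a (FOr a b)"
| orI2: "prov b (FOr a b)"
| boxtop: "prov FTop (FBox FTop)"
| boxand: "prov (FAnd (FBox a) (FBox b)) (FBox (FAnd a b))"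
| diabot: "prov (FDia FBot) FBot"
| diaor: "prov (FDia (FOr a b)) (FOr (FDia a) (FDia b))"
| cut: "prov a b \<Longrightarrow> prov b c \<Longrightarrow> prov a c"
| andI: "prov c a \<Longrightarrow> prov c b \<Longrightarrow> prov c (FAnd a b)"
| orE: "prov a c \<Longrightarrow> prov b c \<Longrightarrow> prov (FOr a b) c"
| boxmono: "prov a b \<Longrightarrow> prov (FBox a) (FBox b)"
| diamono: "prov a b \<Longrightarrow> prov (FDia a) (FDia b)"

text \<open>Maps on the Lindenbaum-Tarski algebra Fm = maps on formulas that are
  constant on interderivability classes.\<close>

definition respects_LT :: "('p fm \<Rightarrow> 'a) \<Rightarrow> bool" where
  "respects_LT h \<longleftrightarrow> (\<forall>a b. prov a b \<and> prov b a \<longrightarrow> h a = h b)"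

definition AFilters :: "('p fm \<Rightarrow> 'a::complete_lattice) set" where
  "AFilters = {f. respects_LT f \<and> f FTop = top \<and> f FBot = bot \<and>
                 (\<forall>a b. f (FAnd a b) = inf (f a) (f b))}"

definition AIdeals :: "('p fm \<Rightarrow> 'a::complete_lattice) set" where
  "AIdeals = {i. respects_LT i \<and> i FBot = top \<and> i FTop = bot \<and>
                 (\<forall>a b. i (FOr a b) = inf (i a) (i b))}"

definition canI :: "('a::complete_lattice \<Rightarrow> 'a \<Rightarrow> 'a) \<Rightarrow> ('p fm \<Rightarrow> 'a) \<Rightarrow> ('p fm \<Rightarrow> 'a) \<Rightarrow> 'a" where
  "canI otimes f i = (SUP phi. otimes (f phi) (i phi))"

definition canRDia :: "('a::complete_lattice \<Rightarrow> 'a \<Rightarrow> 'a) \<Rightarrow> ('p fm \<Rightarrow> 'a) \<Rightarrow> ('p fm \<Rightarrow> 'a) \<Rightarrow> 'a" where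
  "canRDia otimes i f = (SUP phi. otimes (f phi) (i (FDia phi)))"

definition canRBox :: "('a::complete_lattice \<Rightarrow> 'a \<Rightarrow> 'a) \<Rightarrow> ('p fm \<Rightarrow> 'a) \<Rightarrow> ('p fm \<Rightarrow> 'a) \<Rightarrow> 'a" where
  "canRBox otimes f i = (SUP phi. otimes (f (FBox phi)) (i phi))"

text \<open>Galois maps of the canonical polarity, on A-subsets of filters / ideals.\<close>

definition up_op :: "('a::complete_lattice \<Rightarrow> 'a \<Rightarrow> 'a) \<Rightarrow> ('a \<Rightarrow> 'a \<Rightarrow> 'a) \<Rightarrow>
    (('p fm \<Rightarrow> 'a) \<Rightarrow> 'a) \<Rightarrow> ('p fm \<Rightarrow> 'a) \<Rightarrow> 'a" where
  "up_op otimes rimp g i = (INF f\<in>AFilters. rimp (g f) (canI otimes f i))"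

definition down_op :: "('a::complete_lattice \<Rightarrow> 'a \<Rightarrow> 'a) \<Rightarrow> ('a \<Rightarrow> 'a \<Rightarrow> 'a) \<Rightarrow>
    (('p fm \<Rightarrow> 'a) \<Rightarrow> 'a) \<Rightarrow> ('p fm \<Rightarrow> 'a) \<Rightarrow> 'a" where
  "down_op otimes rimp u f = (INF i\<in>AIdeals. rimp (u i) (canI otimes f i))"

definition ext_val :: "'p \<Rightarrow> ('p fm \<Rightarrow> 'a) \<Rightarrow> 'a" where
  "ext_val p f = f (Var p)"

definition int_val :: "'p \<Rightarrow> ('p fm \<Rightarrow> 'a) \<Rightarrow> 'a" where
  "int_val p i = i (Var p)"

end

theory Submission
  imports Defs
begin

text \<open>Since \<open>I(f,i) \<ge> f(\<phi>) \<otimes> i(\<phi>)\<close>, residuation gives \<open>i(\<phi>) \<le> [\<phi>]\<^sup>\<up>(i)\<close> and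
  \<open>f(\<phi>) \<le> (\<phi>)\<^sup>\<down>(f)\<close> for every formula \<open>\<phi>\<close>.  For the converse inequalities one tests
  against the crisp principal filter (ideal) generated by \<open>\<phi>\<close>: its incidence with any
  ideal \<open>i\<close> (filter \<open>f\<close>) is exactly \<open>i(\<phi>)\<close> (\<open>f(\<phi>)\<close>).  It is proper unless \<open>\<phi> \<turnstile> \<bottom>\<close>
  (\<open>\<top> \<turnstile> \<phi>\<close>), and in that case \<open>i(\<phi>) = 1\<close> (\<open>f(\<phi>) = 1\<close>), so nothing is to be shown.\<close>

lemma res_alg_commute: "res_alg otimes rimp \<Longrightarrow> otimes a b = otimes b a"
  unfolding res_alg_def by blast

lemma res_alg_top_mult: "res_alg otimes rimp \<Longrightarrow> otimes top a = a"
  unfolding res_alg_def by blast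

lemma res_alg_residuation: "res_alg otimes rimp \<Longrightarrow> otimes a b \<le> c \<longleftrightarrow> b \<le> rimp a c"
  unfolding res_alg_def by blast

lemma res_alg_top_rimp: "res_alg otimes rimp \<Longrightarrow> rimp top a = a"
  unfolding res_alg_def by blast

lemma res_alg_bot_mult:
  assumes "res_alg otimes rimp" shows "otimes bot a = bot"
proof -
  have "otimes a bot \<le> bot"
    using res_alg_residuation[OF assms] by simp
  then show ?thesis
    using res_alg_commute[OF assms] by (simp add: bot_unique)
qed

lemma AFilters_mono:
  assumes "f \<in> AFilters" "prov a b" shows "f a \<le> f b"
proof -
  have "f (FAnd a b) = f a"
    using assms unfolding AFilters_def respects_LT_def by (blast intro: prov.intros)
  moreover have "f (FAnd a b) = inf (f a) (f b)"
    using assms(1) unfolding AFilters_def by blast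
  ultimately show ?thesis by (metis inf.cobounded2)
qed

lemma AIdeals_antimono:
  assumes "i \<in> AIdeals" "prov a b" shows "i b \<le> i a"
proof -
  have "i (FOr a b) = i b"
    using assms unfolding AIdeals_def respects_LT_def by (blast intro: prov.intros)
  moreover have "i (FOr a b) = inf (i a) (i b)"
    using assms(1) unfolding AIdeals_def by blast
  ultimately show ?thesis by (metis inf.cobounded1)
qed

definition principal_filter :: "'p fm \<Rightarrow> 'p fm \<Rightarrow> 'a::complete_lattice" where
  "principal_filter a \<phi> = (if prov a \<phi> then top else bot)"

definition principal_ideal :: "'p fm \<Rightarrow> 'p fm \<Rightarrow> 'a::complete_lattice" where
  "principal_ideal a \<phi> = (if prov \<phi> a then top else bot)"

lemma principal_filter_in_AFilters:
  "\<not> prov a FBot \<Longrightarrow> principal_filter a \<in> AFilters"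
  unfolding AFilters_def respects_LT_def principal_filter_def
  by (auto intro: prov.intros dest: prov.cut)

lemma principal_ideal_in_AIdeals:
  "\<not> prov FTop a \<Longrightarrow> principal_ideal a \<in> AIdeals"
  unfolding AIdeals_def respects_LT_def principal_ideal_def
  by (auto intro: prov.intros dest: prov.cut)

lemma mult_le_canI: "otimes (f \<phi>) (i \<phi>) \<le> canI otimes f i"
  unfolding canI_def by (rule SUP_upper) simp

lemma canI_principal_filter:
  assumes alg: "res_alg otimes rimp" and i: "i \<in> AIdeals"
  shows "canI otimes (principal_filter a) i = i a"
proof (rule antisym)
  show "canI otimes (principal_filter a) i \<le> i a"
    unfolding canI_def principal_filter_def
    using AIdeals_antimono[OF i]
    by (auto intro!: SUP_least simp: res_alg_top_mult[OF alg] res_alg_bot_mult[OF alg])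
  show "i a \<le> canI otimes (principal_filter a) i"
    using mult_le_canI[of otimes "principal_filter a" a i]
    by (simp add: principal_filter_def prov.refl res_alg_top_mult[OF alg])
qed

lemma canI_principal_ideal:
  assumes alg: "res_alg otimes rimp" and f: "f \<in> AFilters"
  shows "canI otimes f (principal_ideal a) = f a"
proof (rule antisym)
  show "canI otimes f (principal_ideal a) \<le> f a"
    unfolding canI_def principal_ideal_def
    using AFilters_mono[OF f] res_alg_commute[OF alg]
    by (auto intro!: SUP_least simp: res_alg_top_mult[OF alg] res_alg_bot_mult[OF alg])
  show "f a \<le> canI otimes f (principal_ideal a)"
    using mult_le_canI[of otimes f a "principal_ideal a"] res_alg_commute[OF alg]
    by (simp add: principal_ideal_def prov.refl res_alg_top_mult[OF alg])
qed

lemma up_op_eval: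
  assumes alg: "res_alg otimes rimp" and i: "i \<in> AIdeals"
  shows "up_op otimes rimp (\<lambda>f. f \<phi>) i = i \<phi>"
proof (rule antisym)
  show "up_op otimes rimp (\<lambda>f. f \<phi>) i \<le> i \<phi>"
  proof (cases "prov \<phi> FBot")
    case True
    have "i FBot = top"
      using i by (simp add: AIdeals_def)
    with AIdeals_antimono[OF i True] show ?thesis
      by (simp add: top_unique)
  next
    case False
    then have "up_op otimes rimp (\<lambda>f. f \<phi>) i
        \<le> rimp (principal_filter \<phi> \<phi>) (canI otimes (principal_filter \<phi>) i)"
      unfolding up_op_def by (intro INF_lower principal_filter_in_AFilters)
    also have "\<dots> = i \<phi>"
      by (simp add: principal_filter_def prov.refl res_alg_top_rimp[OF alg]
          canI_principal_filter[OF alg i])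
    finally show ?thesis .
  qed
  show "i \<phi> \<le> up_op otimes rimp (\<lambda>f. f \<phi>) i"
    unfolding up_op_def
    using mult_le_canI res_alg_residuation[OF alg] by (blast intro: INF_greatest)
qed

lemma down_op_eval:
  assumes alg: "res_alg otimes rimp" and f: "f \<in> AFilters"
  shows "down_op otimes rimp (\<lambda>i. i \<phi>) f = f \<phi>"
proof (rule antisym)
  show "down_op otimes rimp (\<lambda>i. i \<phi>) f \<le> f \<phi>"
  proof (cases "prov FTop \<phi>")
    case True
    have "f FTop = top"
      using f by (simp add: AFilters_def)
    with AFilters_mono[OF f True] show ?thesis
      by (simp add: top_unique)
  next
    case False
    then have "down_op otimes rimp (\<lambda>i. i \<phi>) f
        \<le> rimp (principal_ideal \<phi> \<phi>) (canI otimes f (principal_ideal \<phi>))"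
      unfolding down_op_def by (intro INF_lower principal_ideal_in_AIdeals)
    also have "\<dots> = f \<phi>"
      by (simp add: principal_ideal_def prov.refl res_alg_top_rimp[OF alg]
          canI_principal_ideal[OF alg f])
    finally show ?thesis .
  qed
  show "f \<phi> \<le> down_op otimes rimp (\<lambda>i. i \<phi>) f"
    unfolding down_op_def
    using mult_le_canI res_alg_residuation[OF alg] res_alg_commute[OF alg]
    by (metis (no_types, lifting) INF_greatest)
qed

theorem mainTheorem1:
  fixes otimes rimp :: "'a::complete_lattice \<Rightarrow> 'a \<Rightarrow> 'a" and p :: 'p
  assumes "res_alg otimes rimp"
  shows "(\<forall>i\<in>(AIdeals :: ('p fm \<Rightarrow> 'a) set).
            up_op otimes rimp (ext_val p) i = int_val p i) \<and>
         (\<forall>f\<in>(AFilters :: ('p fm \<Rightarrow> 'a) set).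
            ext_val p f = down_op otimes rimp (int_val p) f)"
  unfolding ext_val_def[abs_def] int_val_def[abs_def]
  by (simp add: up_op_eval[OF assms] down_op_eval[OF assms])

end
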